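(* Let $\mathbf{k}$ be a field, $n\ge 1$, $N\ge 2$, and let $P_1,\dots,P_N\in\mathbf{k}^n$ be pairwise distinct points. In the point trie $T$ of the ordered list $[P_1,\dots,P_N]$, let $h\in\{1,\dots,n\}$ be the smallest level such that the node $v$ at level $h$ whose label contains $N$ has label exactly $\{N\}$. Then the parent of $v$ has at least one child other than $v$; let $w$ be the child of the parent of $v$ lying immediately to the left of $v$ (in the left-to-right order of children), and let $i_1$ be the smallest element of the label of $w$. Then: (1) $h$ equals the $\sigma$-value $\sigma(P_N,\{P_1,\dots,P_{N-1}\})$; (2) $P_{i_1}$ is the $\sigma$-antecedent of $P_N$, i.e. $i_1$ is the maximal index $m\in\{1,\dots,N-1\}$ such that $\pi_{h-1}(P_m)=\pi_{h-1}(P_N)$ and the exponents of $x_{h+1},\dots,x_n$ in the term $\Phi(P_m)$ are all zero, where $\Phi$ is the Cerlienco–Mureddu correspondence of $[P_1,\dots,P_{N-1}]$.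
   Context: Write $P_i=(a_{1,i},\dots,a_{n,i})$. For $0\le m\le n$, $\pi_m:\mathbf{k}^n\to\mathbf{k}^m$ is the projection onto the first $m$ coordinates ($\pi_0$ maps everything to the empty tuple), and for terms $\pi^m(x_1^{\gamma_1}\cdots x_n^{\gamma_n})$ denotes the exponent tuple $(\gamma_m,\dots,\gamma_n)$. Terms are monomials in $\mathbf{k}[x_1,\dots,x_n]$, ordered lexicographically with $x_1<\dots<x_n$. Point trie of an ordered list $[P_1,\dots,P_N]$ of distinct points: a rooted tree with levels $0,\dots,n$. For each $j$ and each value $c\in\pi_j(\{P_1,\dots,P_N\})$ there is exactly one node at level $j$, whose label is the set $\{i:\pi_j(P_i)=c\}$ (so the root has label $\{1,\dots,N\}$ and each leaf has a singleton label). A node at level $j\ge1$ with value $c$ is a child of the node at level $j-1$ with value obtained by dropping the last coordinate of $c$, and the edge between them is labelled by that last coordinate. The children of each node are ordered from left to right by increasing smallest element of their labels (equivalently, in the order in which they are created when the points are inserted one by one in the order $P_1,P_2,\dots$). $\sigma$-value: for a finite set $\mathbf{X}$ of points and $P\notin\mathbf{X}$, $\sigma(P,\mathbf{X})$ is the maximal $s\in\{1,\dots,n\}$ such that some $Q\in\mathbf{X}$ satisfies $\pi_{s-1}(Q)=\pi_{s-1}(P)$. Cerlienco–Mureddu correspondence $\Phi$ of an ordered list $[P_1,\dots,P_M]$ of distinct points of $\mathbf{k}^n$ (defined recursively on $M$ and on $n$; write $\Phi(P_i)=x_1^{\alpha^{(i)}_1}\cdots x_n^{\alpha^{(i)}_n}$):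 $\Phi(P_1)=1$. For $M>1$, assuming $\alpha^{(1)},\dots,\alpha^{(M-1)}$ known (these are the values of the correspondence of $[P_1,\dots,P_{M-1}]$), let $s=\sigma(P_M,\{P_1,\dots,P_{M-1}\})$; let the $\sigma$-antecedent $P_l$ be the point with maximal index $l\le M-1$ such that $\pi_{s-1}(P_l)=\pi_{s-1}(P_M)$ and $\alpha^{(l)}_{s+1}=\dots=\alpha^{(l)}_n=0$. Set $\alpha^{(M)}_j=0$ for $j>s$ and $\alpha^{(M)}_s=\alpha^{(l)}_s+1$. Then let $Y$ be the ordered list (in the order of indices) of the projections $\pi_{s-1}(P_i)$ of the points $P_i$, $1\le i\le M$, with $(\alpha^{(i)}_s,\dots,\alpha^{(i)}_n)=(\alpha^{(M)}_s,0,\dots,0)$; apply the Cerlienco–Mureddu correspondence in $\mathbf{k}^{s-1}$ to $Y$ and set $(\alpha^{(M)}_1,\dots,\alpha^{(M)}_{s-1})$ equal to the exponent vector of its value at $\pi_{s-1}(P_M)$. The image of $\Phi$ is the lexicographic Gröbner escalier of the vanishing ideal of the points. *)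

theory Defs
  imports Main
begin

text \<open>Points of k^n are lists of length n over a field 'a.  The projection pi_j is take j.
  Terms x_1^g1 ... x_n^gn are represented by their exponent vectors (nat lists of length n);
  the exponent of x_j is at list position j-1.\<close>

definition sigma_val :: "nat \<Rightarrow> 'a list \<Rightarrow> 'a list set \<Rightarrow> nat" where
  "sigma_val n p X = Max {s \<in> {1..n}. \<exists>q\<in>X. take (s - 1) q = take (s - 1) p}"

text \<open>Cerlienco--Mureddu correspondence of an ordered list of points of k^n:
  returns the list of exponent vectors of the terms Phi(P_1), ..., Phi(P_M).\<close>

function cm :: "nat \<Rightarrow> 'a list list \<Rightarrow> nat list list" where
  "cm n ps =
    (if length ps \<le> 1 then map (\<lambda>_. replicate n 0) ps
     else
       (let qs = butlast ps; p = last ps; M = length ps;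
            s = sigma_val n p (set qs)
        in if s < 1 \<or> n < s then []
           else
             (let A = cm n qs;
                  l = (GREATEST l. l < length qs \<and> take (s - 1) (qs ! l) = take (s - 1) p \<and>
                          (\<forall>j. s < j \<and> j \<le> n \<longrightarrow> A ! l ! (j - 1) = 0));
                  a = A ! l ! (s - 1) + 1;
                  Y = [take (s - 1) (ps ! i). i \<leftarrow> [0..<M],
                         i = M - 1 \<or> drop (s - 1) (A ! i) = a # replicate (n - s) 0];
                  B = cm (s - 1) Y
              in A @ [last B @ [a] @ replicate (n - s) 0])))"
  by pat_completeness auto
termination
  by (relation "measures [\<lambda>(n, ps). n, \<lambda>(n, ps). length ps]") auto

text \<open>Point trie of the ordered list [P 1, ..., P N]: the node at level j with value c
  (c in pi_j of the points) is identified with the pair (j, c).\<close>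

definition trie_nodes :: "(nat \<Rightarrow> 'a list) \<Rightarrow> nat \<Rightarrow> nat \<Rightarrow> 'a list set" where
  "trie_nodes P N j = (\<lambda>i. take j (P i)) ` {1..N}"

definition trie_label :: "(nat \<Rightarrow> 'a list) \<Rightarrow> nat \<Rightarrow> nat \<Rightarrow> 'a list \<Rightarrow> nat set" where
  "trie_label P N j c = {i \<in> {1..N}. take j (P i) = c}"

definition trie_children :: "(nat \<Rightarrow> 'a list) \<Rightarrow> nat \<Rightarrow> nat \<Rightarrow> 'a list \<Rightarrow> 'a list set" where
  "trie_children P N j c = {c' \<in> trie_nodes P N (Suc j). butlast c' = c}"

text \<open>left-to-right order of children: by increasing smallest element of the label\<close>
definition trie_key :: "(nat \<Rightarrow> 'a list) \<Rightarrow> nat \<Rightarrow> nat \<Rightarrow> 'a list \<Rightarrow> nat" where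
  "trie_key P N j c = Min (trie_label P N j c)"

definition trie_left_neighbor ::
    "(nat \<Rightarrow> 'a list) \<Rightarrow> nat \<Rightarrow> nat \<Rightarrow> 'a list \<Rightarrow> 'a list \<Rightarrow> 'a list \<Rightarrow> bool" where
  "trie_left_neighbor P N j c w v \<longleftrightarrow>
     w \<in> trie_children P N j c \<and> v \<in> trie_children P N j c \<and>
     trie_key P N (Suc j) w < trie_key P N (Suc j) v \<and>
     \<not> (\<exists>u \<in> trie_children P N j c.
          trie_key P N (Suc j) w < trie_key P N (Suc j) u \<and>
          trie_key P N (Suc j) u < trie_key P N (Suc j) v)"

end

theory Submission
  imports Defs
begin

(* Write T(P_i) for the exponent vector of Phi(P_i).  The whole argument rests on one
   characterisation, proved by induction along the list of points: T(P_i) involves only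
   x_1, ..., x_t exactly when P_i is the first point of its level-t node of the trie.  Indeed,
   the vector added for a new point P has its last nonzero entry at position
   sigma = sigma(P, earlier points), and sigma <= t holds iff no earlier point agrees with P
   in the first t coordinates.
   The same equivalence gives (1): the level-t node of P_N is {N} iff sigma <= t, so the least
   such level is sigma.  For (2), with t = h it identifies the candidates for the
   sigma-antecedent (earlier points below the parent node of v whose terms involve only
   x_1, ..., x_h) with the smallest labels of the siblings of v that lie to its left.  The
   antecedent is the largest of them, i.e. the smallest label of the left neighbour of v. *)

declare cm.simps[simp del]

definition vanishes_above :: "nat \<Rightarrow> nat \<Rightarrow> nat list \<Rightarrow> bool" where
  "vanishes_above n t v \<longleftrightarrow> (\<forall>j. t < j \<and> j \<le> n \<longrightarrow> v ! (j - 1) = 0)"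

lemma vanishes_above_iff: "vanishes_above n t v \<longleftrightarrow> (\<forall>j\<in>{t + 1..n}. v ! (j - 1) = 0)"
  unfolding vanishes_above_def by auto

lemma vanishes_above_x1_power: "vanishes_above n 1 (a # replicate (n - 1) 0)"
  unfolding vanishes_above_def by (auto simp: nth_Cons split: nat.split)

lemma vanishes_above_append_iff:
  assumes "length B = s - 1" "s \<in> {1..n}" "a \<noteq> 0"
  shows "vanishes_above n t (B @ [a] @ replicate (n - s) 0) \<longleftrightarrow> s \<le> t"
proof
  assume "vanishes_above n t (B @ [a] @ replicate (n - s) 0)"
  then have "t < s \<Longrightarrow> (B @ [a] @ replicate (n - s) 0) ! (s - 1) = 0"
    using assms(2) unfolding vanishes_above_def by auto
  then show "s \<le> t" using assms by (force simp: nth_append)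
next
  assume "s \<le> t"
  then show "vanishes_above n t (B @ [a] @ replicate (n - s) 0)"
    using assms unfolding vanishes_above_def by (auto simp: nth_append nth_Cons split: nat.split)
qed

(* The invariant needed at sigma = 1: it keeps the recursive call of cm at level 0 on a single
   point; on more points that call returns [], and last [] is junk. *)
definition x1_powers_increasing :: "nat \<Rightarrow> nat list list \<Rightarrow> bool" where
  "x1_powers_increasing n V \<longleftrightarrow>
     (\<forall>i k. i < k \<and> k < length V \<and> vanishes_above n 1 (V ! i) \<and> vanishes_above n 1 (V ! k)
        \<longrightarrow> V ! i ! 0 < V ! k ! 0)"

lemma x1_powers_increasing_snoc:
  assumes "x1_powers_increasing n A"
    and "vanishes_above n 1 v \<Longrightarrow>
           \<forall>i < length A. vanishes_above n 1 (A ! i) \<longrightarrow> A ! i ! 0 < v ! 0"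
  shows "x1_powers_increasing n (A @ [v])"
  using assms unfolding x1_powers_increasing_def by (auto simp: nth_append less_Suc_eq)

lemma x1_power_le_Greatest:
  assumes "x1_powers_increasing n A" "i < length A" "vanishes_above n 1 (A ! i)"
  shows "A ! i ! 0 \<le> A ! (GREATEST l. l < length A \<and> vanishes_above n 1 (A ! l)) ! 0"
proof -
  define Q where "Q = (\<lambda>l. l < length A \<and> vanishes_above n 1 (A ! l))"
  have bound: "Q l \<Longrightarrow> l \<le> length A" for l unfolding Q_def by simp
  have "Q i" unfolding Q_def using assms(2,3) by simp
  have max: "Q (Greatest Q)" by (rule GreatestI_nat[of Q, OF \<open>Q i\<close> bound])
  have "i \<le> Greatest Q" by (rule Greatest_le_nat[of Q, OF \<open>Q i\<close> bound])
  moreover have "A ! i ! 0 < A ! Greatest Q ! 0" if "i < Greatest Q"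
    using assms(1,3) that max unfolding x1_powers_increasing_def Q_def by blast
  ultimately have "A ! i ! 0 \<le> A ! Greatest Q ! 0" by (cases "i = Greatest Q") auto
  then show ?thesis unfolding Q_def .
qed

lemma sigma_val_mem:
  assumes "1 \<le> n" "X \<noteq> {}"
  shows "sigma_val n p X \<in> {1..n}"
    and "\<exists>q\<in>X. take (sigma_val n p X - 1) q = take (sigma_val n p X - 1) p"
proof -
  let ?S = "{s \<in> {1..n}. \<exists>q\<in>X. take (s - 1) q = take (s - 1) p}"
  have "1 \<in> ?S" using assms by auto
  moreover have "finite ?S" by simp
  ultimately have "Max ?S \<in> ?S" using Max_in by blast
  then show "sigma_val n p X \<in> {1..n}"
    and "\<exists>q\<in>X. take (sigma_val n p X - 1) q = take (sigma_val n p X - 1) p"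
    unfolding sigma_val_def by auto
qed

lemma sigma_val_ge:
  "s \<in> {1..n} \<Longrightarrow> \<exists>q\<in>X. take (s - 1) q = take (s - 1) p \<Longrightarrow> s \<le> sigma_val n p X"
  unfolding sigma_val_def by (intro Max_ge) auto

lemma sigma_val_le_iff:
  assumes "1 \<le> n" "X \<noteq> {}" "p \<notin> X" "length p = n" "\<forall>q\<in>X. length q = n" "t \<le> n"
  shows "sigma_val n p X \<le> t \<longleftrightarrow> (\<forall>q\<in>X. take t q \<noteq> take t p)"
proof
  assume le: "sigma_val n p X \<le> t"
  show "\<forall>q\<in>X. take t q \<noteq> take t p"
  proof (intro ballI notI)
    fix q assume q: "q \<in> X" "take t q = take t p"
    show False
    proof (cases "t < n")
      case True
      then have "Suc t \<le> sigma_val n p X" using q by (intro sigma_val_ge) auto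
      with le show False by simp
    next
      case False
      then have "t = n" using \<open>t \<le> n\<close> by simp
      then have "q = p" using q assms(4,5) by simp
      with q \<open>p \<notin> X\<close> show False by simp
    qed
  qed
next
  assume apart: "\<forall>q\<in>X. take t q \<noteq> take t p"
  show "sigma_val n p X \<le> t"
  proof (rule ccontr)
    assume "\<not> sigma_val n p X \<le> t"
    then have "min t (sigma_val n p X - 1) = t" by simp
    moreover obtain q where "q \<in> X" "take (sigma_val n p X - 1) q = take (sigma_val n p X - 1) p"
      using sigma_val_mem[OF assms(1,2)] by blast
    ultimately show False using apart by (metis take_take)
  qed
qed

lemma cm_Nil: "cm n [] = []"
  by (subst cm.simps) simp

lemma cm_single: "cm n [p] = [replicate n 0]"
  by (subst cm.simps) simp

locale cm_snoc_step =
  fixes n :: nat and qs :: "'a list list" and p :: "'a list"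
  assumes qs_ne: "qs \<noteq> []" and dim_pos: "1 \<le> n"
begin

definition sigma :: nat where
  "sigma = sigma_val n p (set qs)"

definition antecedent :: nat where
  "antecedent = (GREATEST l. l < length qs \<and> take (sigma - 1) (qs ! l) = take (sigma - 1) p
                               \<and> vanishes_above n sigma (cm n qs ! l))"

definition exponent :: nat where
  "exponent = cm n qs ! antecedent ! (sigma - 1) + 1"

definition projected :: "'a list list" where
  "projected = map (\<lambda>i. take (sigma - 1) ((qs @ [p]) ! i))
     (filter (\<lambda>i. i = length qs
                  \<or> drop (sigma - 1) (cm n qs ! i) = exponent # replicate (n - sigma) 0)
       [0..<Suc (length qs)])"

definition new_term :: "nat list" where
  "new_term = last (cm (sigma - 1) projected) @ [exponent] @ replicate (n - sigma) 0"

lemma sigma_mem: "sigma \<in> {1..n}"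
  unfolding sigma_def using sigma_val_mem(1)[of n "set qs" p] qs_ne dim_pos by simp

lemma cm_snoc: "cm n (qs @ [p]) = cm n qs @ [new_term]"
proof -
  have s: "\<not> (sigma < 1 \<or> n < sigma)" using sigma_mem by simp
  have len: "\<not> length (qs @ [p]) \<le> 1" using qs_ne by (cases qs) auto
  have concat_map_if:
    "concat (map (\<lambda>i. if f i then [g i] else []) [0..<M]) = map g (filter f [0..<M])"
    for f and g :: "nat \<Rightarrow> 'b" and M
    by (induction M) auto
  show ?thesis
    by (subst cm.simps,
        simp only: Let_def len if_False butlast_snoc last_snoc sigma_def[symmetric] s,
        simp only: vanishes_above_def[symmetric] antecedent_def[symmetric]
          exponent_def[symmetric] concat_map_if length_append_singleton diff_Suc_1
          projected_def[symmetric] new_term_def[symmetric])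
qed

end

lemma cm_length: "1 \<le> n \<Longrightarrow> length (cm n ps) = length ps"
proof (induction ps rule: rev_induct)
  case (snoc p qs)
  show ?case
  proof (cases "qs = []")
    case False
    then interpret cm_snoc_step n qs p using snoc.prems by unfold_locales
    show ?thesis using snoc by (simp add: cm_snoc)
  qed (simp add: cm_single)
qed (simp add: cm_Nil)

context cm_snoc_step
begin

lemma cm_projected_ne: "cm (sigma - 1) projected \<noteq> []" if "2 \<le> sigma"
proof -
  have "length (cm (sigma - 1) projected) = length projected"
    using that by (intro cm_length) simp
  moreover have "projected \<noteq> []" unfolding projected_def by (auto simp: filter_empty_conv)
  ultimately show ?thesis by auto
qed

lemma exponent_fresh:
  assumes "x1_powers_increasing n (cm n qs)" "sigma = 1"
    and "i < length qs" "vanishes_above n 1 (cm n qs ! i)"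
  shows "cm n qs ! i ! 0 < exponent"
proof -
  have len: "length (cm n qs) = length qs" using cm_length dim_pos by blast
  then have "antecedent = (GREATEST l. l < length (cm n qs) \<and> vanishes_above n 1 (cm n qs ! l))"
    unfolding antecedent_def using assms(2) by simp
  then have "cm n qs ! i ! 0 \<le> cm n qs ! antecedent ! 0"
    using x1_power_le_Greatest[OF assms(1)] assms(3,4) len by simp
  then show ?thesis unfolding exponent_def using assms(2) by simp
qed

lemma projected_sigma_one:
  assumes "x1_powers_increasing n (cm n qs)" "sigma = 1"
  shows "projected = [[]]"
proof -
  have "drop 0 (cm n qs ! i) \<noteq> exponent # replicate (n - 1) 0" if "i < length qs" for i
    using exponent_fresh[OF assms that] vanishes_above_x1_power[of n exponent] by auto
  then have "filter (\<lambda>i. i = length qs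
                        \<or> drop (sigma - 1) (cm n qs ! i) = exponent # replicate (n - sigma) 0)
               [0..<Suc (length qs)] = [length qs]"
    using assms(2) by (auto simp: filter_empty_conv)
  then show ?thesis unfolding projected_def using assms(2) by simp
qed

lemma x1_powers_increasing_cm_snoc:
  assumes "x1_powers_increasing n (cm n qs)"
    and "length (last (cm (sigma - 1) projected)) = sigma - 1"
  shows "x1_powers_increasing n (cm n (qs @ [p]))"
  unfolding cm_snoc
proof (rule x1_powers_increasing_snoc[OF assms(1)])
  assume "vanishes_above n 1 new_term"
  then have "sigma = 1"
    using vanishes_above_append_iff[OF assms(2) sigma_mem, of exponent 1] sigma_mem
    unfolding new_term_def exponent_def by simp
  then show "\<forall>i < length (cm n qs).
               vanishes_above n 1 (cm n qs ! i) \<longrightarrow> cm n qs ! i ! 0 < new_term ! 0"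
    using exponent_fresh[OF assms(1)] assms(2) cm_length[OF dim_pos, of qs]
    unfolding new_term_def by auto
qed

end

lemma cm_wellformed:
  assumes "1 \<le> n"
  shows "(\<forall>v\<in>set (cm n ps). length v = n) \<and> x1_powers_increasing n (cm n ps)"
  using assms
proof (induction n arbitrary: ps rule: less_induct)
  case (less n)
  show ?case
  proof (induction ps rule: rev_induct)
    case Nil
    then show ?case by (simp add: cm_Nil x1_powers_increasing_def)
  next
    case (snoc p qs)
    show ?case
    proof (cases "qs = []")
      case True
      then show ?thesis by (simp add: cm_single x1_powers_increasing_def)
    next
      case False
      interpret cm_snoc_step n qs p using False less.prems by unfold_locales
      have "length (last (cm (sigma - 1) projected)) = sigma - 1"
      proof (cases "sigma = 1")
        case True
        then show ?thesis using projected_sigma_one snoc.IH by (simp add: cm_single)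
      next
        case False
        then have "2 \<le> sigma" using sigma_mem by simp
        then show ?thesis
          using less.IH[of "sigma - 1" projected] sigma_mem cm_projected_ne last_in_set by auto
      qed
      then show ?thesis
        using x1_powers_increasing_cm_snoc snoc.IH sigma_mem unfolding cm_snoc new_term_def
        by auto
    qed
  qed
qed

context cm_snoc_step
begin

lemma new_term_vanishes_above_iff: "vanishes_above n t new_term \<longleftrightarrow> sigma \<le> t"
proof -
  have "length (last (cm (sigma - 1) projected)) = sigma - 1"
    using cm_wellformed[OF dim_pos, of "qs @ [p]"] sigma_mem unfolding cm_snoc new_term_def
    by auto
  then show ?thesis
    unfolding new_term_def exponent_def by (rule vanishes_above_append_iff[OF _ sigma_mem]) simp
qed

end

lemma cm_vanishes_above_iff:
  assumes "distinct ps" "\<forall>x\<in>set ps. length x = n" "1 \<le> n" "i < length ps" "t \<le> n"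
  shows "vanishes_above n t (cm n ps ! i) \<longleftrightarrow> (\<forall>k<i. take t (ps ! k) \<noteq> take t (ps ! i))"
  using assms
proof (induction ps arbitrary: i rule: rev_induct)
  case Nil
  then show ?case by simp
next
  case (snoc p qs)
  show ?case
  proof (cases "qs = []")
    case True
    then show ?thesis using snoc.prems by (auto simp: cm_single vanishes_above_def)
  next
    case False
    interpret cm_snoc_step n qs p using False snoc.prems by unfold_locales
    have len: "length (cm n qs) = length qs" using cm_length \<open>1 \<le> n\<close> by blast
    show ?thesis
    proof (cases "i < length qs")
      case True
      then show ?thesis using snoc.IH[of i] snoc.prems len by (simp add: cm_snoc nth_append)
    next
      case False
      then have i: "i = length qs" using snoc.prems(4) by simp
      have "vanishes_above n t (cm n (qs @ [p]) ! i) \<longleftrightarrow> sigma \<le> t"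
        using new_term_vanishes_above_iff len i by (simp add: cm_snoc nth_append)
      also have "\<dots> \<longleftrightarrow> (\<forall>q\<in>set qs. take t q \<noteq> take t p)"
        unfolding sigma_def using sigma_val_le_iff[of n "set qs" p] qs_ne snoc.prems by simp
      also have "\<dots> \<longleftrightarrow> (\<forall>k<i. take t ((qs @ [p]) ! k) \<noteq> take t ((qs @ [p]) ! i))"
        using i by (simp add: all_set_conv_all_nth nth_append)
      finally show ?thesis .
    qed
  qed
qed

lemma cm_map_vanishes_above_iff:
  assumes "inj_on P {1..<N}" "\<forall>i\<in>{1..<N}. length (P i) = n" "1 \<le> n"
    and "m \<in> {1..<N}" "t \<le> n"
  shows "vanishes_above n t (cm n (map P [1..<N]) ! (m - 1))
    \<longleftrightarrow> (\<forall>k\<in>{1..<N}. take t (P k) = take t (P m) \<longrightarrow> m \<le> k)"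
proof -
  have "distinct (map P [1..<N])" using assms(1) by (simp add: distinct_map)
  then have "vanishes_above n t (cm n (map P [1..<N]) ! (m - 1))
      \<longleftrightarrow> (\<forall>k<m - 1. take t (P (Suc k)) \<noteq> take t (P m))"
    using cm_vanishes_above_iff[of "map P [1..<N]" n "m - 1" t] assms by auto
  also have "\<dots> \<longleftrightarrow> (\<forall>k\<in>Suc ` {..<m - 1}. take t (P k) \<noteq> take t (P m))"
    by auto
  also have "\<dots> \<longleftrightarrow> (\<forall>k\<in>{1..<N}. take t (P k) = take t (P m) \<longrightarrow> m \<le> k)"
    using assms(4) by (auto simp: image_Suc_lessThan not_le)
  finally show ?thesis .
qed

lemma finite_trie_children: "finite (trie_children P N j c)"
  unfolding trie_children_def trie_nodes_def by simp

lemma trie_children_iff: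
  assumes "\<forall>i\<in>{1..N}. length (P i) = n" "j < n"
  shows "u \<in> trie_children P N j c
    \<longleftrightarrow> (\<exists>i\<in>{1..N}. u = take (Suc j) (P i) \<and> take j (P i) = c)"
  unfolding trie_children_def trie_nodes_def using assms by (auto simp: butlast_take)

lemma trie_key_le: "i \<in> trie_label P N j c \<Longrightarrow> trie_key P N j c \<le> i"
  unfolding trie_key_def trie_label_def by (intro Min_le) auto

lemma trie_key_mem: "trie_label P N j c \<noteq> {} \<Longrightarrow> trie_key P N j c \<in> trie_label P N j c"
  unfolding trie_key_def trie_label_def by (intro Min_in) auto

lemma trie_key_eq_iff:
  assumes "m \<in> {1..N}"
  shows "trie_key P N j (take j (P m)) = m
    \<longleftrightarrow> (\<forall>k\<in>{1..N}. take j (P k) = take j (P m) \<longrightarrow> m \<le> k)"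
proof
  assume "trie_key P N j (take j (P m)) = m"
  then show "\<forall>k\<in>{1..N}. take j (P k) = take j (P m) \<longrightarrow> m \<le> k"
    using trie_key_le[of _ P N j] unfolding trie_label_def by fastforce
next
  assume "\<forall>k\<in>{1..N}. take j (P k) = take j (P m) \<longrightarrow> m \<le> k"
  then show "trie_key P N j (take j (P m)) = m"
    using assms unfolding trie_key_def trie_label_def by (intro Min_eqI) auto
qed

lemma trie_label_eq_singleton_iff:
  assumes "1 \<le> N"
  shows "trie_label P N j (take j (P N)) = {N}
    \<longleftrightarrow> (\<forall>i\<in>{1..N - 1}. take j (P i) \<noteq> take j (P N))"
proof -
  have "N \<in> trie_label P N j (take j (P N))" using assms by (simp add: trie_label_def)
  then have "trie_label P N j (take j (P N)) = {N}
      \<longleftrightarrow> trie_label P N j (take j (P N)) \<subseteq> {N}"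
    by blast
  also have "\<dots> \<longleftrightarrow> (\<forall>i\<in>{1..N}. take j (P i) = take j (P N) \<longrightarrow> i = N)"
    unfolding trie_label_def by blast
  also have "{1..N} = insert N {1..N - 1}" using assms by auto
  finally show ?thesis using assms by auto
qed

lemma trie_child_keys_below:
  assumes "\<forall>i\<in>{1..N}. length (P i) = n" "j < n"
  shows "trie_key P N (Suc j) ` {u \<in> trie_children P N j c. trie_key P N (Suc j) u < b}
    = {m \<in> {1..N}. m < b \<and> take j (P m) = c \<and> trie_key P N (Suc j) (take (Suc j) (P m)) = m}"
    (is "?K ` ?C = ?M")
proof
  show "?K ` ?C \<subseteq> ?M"
  proof
    fix m assume "m \<in> ?K ` ?C"
    then obtain i u where u: "i \<in> {1..N}" "u = take (Suc j) (P i)" "take j (P i) = c"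
      "m = ?K u" "m < b"
      using trie_children_iff[OF assms] by blast
    then have "m \<in> trie_label P N (Suc j) u"
      using trie_key_mem unfolding trie_label_def by blast
    then have m: "m \<in> {1..N}" "take (Suc j) (P m) = u" unfolding trie_label_def by auto
    have "take j (P m) = take j (take (Suc j) (P m))" by simp
    also have "\<dots> = take j (P i)" using m(2) u(2) by simp
    finally show "m \<in> ?M" using m u by simp
  qed
next
  show "?M \<subseteq> ?K ` ?C"
  proof
    fix m assume m: "m \<in> ?M"
    then have "take (Suc j) (P m) \<in> trie_children P N j c"
      using trie_children_iff[OF assms] by blast
    with m show "m \<in> ?K ` ?C" by (intro image_eqI[of _ _ "take (Suc j) (P m)"]) auto
  qed
qed

lemma trie_left_neighbor_iff_Max:
  fixes P :: "nat \<Rightarrow> 'a list"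
  assumes "v \<in> trie_children P N j c"
  defines "K \<equiv> trie_key P N (Suc j)" and "C \<equiv> trie_children P N j c"
  shows "trie_left_neighbor P N j c w v
    \<longleftrightarrow> w \<in> C \<and> K w < K v \<and> K w = Max (K ` {u \<in> C. K u < K v})"
proof -
  have fin: "finite (K ` {u \<in> C. K u < K v})"
    unfolding C_def by (intro finite_imageI finite_subset[OF _ finite_trie_children]) auto
  show ?thesis
  proof
    assume "trie_left_neighbor P N j c w v"
    then have w: "w \<in> C" "K w < K v" and gap: "\<not> (\<exists>u\<in>C. K w < K u \<and> K u < K v)"
      unfolding trie_left_neighbor_def K_def C_def by auto
    have "K w = Max (K ` {u \<in> C. K u < K v})"
      using w gap fin by (intro Max_eqI[symmetric]) (auto simp: not_less)
    with w show "w \<in> C \<and> K w < K v \<and> K w = Max (K ` {u \<in> C. K u < K v})" by blast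
  next
    assume w: "w \<in> C \<and> K w < K v \<and> K w = Max (K ` {u \<in> C. K u < K v})"
    have "K u \<le> K w" if "u \<in> C" "K u < K v" for u
    proof -
      have "K u \<in> K ` {u \<in> C. K u < K v}" using that by blast
      then show ?thesis using Max_ge[OF fin] w by simp
    qed
    then have "\<not> (\<exists>u\<in>C. K w < K u \<and> K u < K v)" by (blast dest: leD)
    then show "trie_left_neighbor P N j c w v"
      using w assms(1) unfolding trie_left_neighbor_def K_def C_def by blast
  qed
qed

lemma trie_left_neighbor_exists:
  assumes "v \<in> trie_children P N j c" "u \<in> trie_children P N j c"
    and "trie_key P N (Suc j) u < trie_key P N (Suc j) v"
  shows "\<exists>w. trie_left_neighbor P N j c w v"
proof -
  let ?K = "trie_key P N (Suc j)" and ?C = "trie_children P N j c"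
  have "Max (?K ` {u \<in> ?C. ?K u < ?K v}) \<in> ?K ` {u \<in> ?C. ?K u < ?K v}"
    using assms by (intro Max_in finite_imageI finite_subset[OF _ finite_trie_children]) auto
  then obtain w where "w \<in> ?C" "?K w < ?K v" "?K w = Max (?K ` {u \<in> ?C. ?K u < ?K v})"
    by auto
  then show ?thesis using trie_left_neighbor_iff_Max[OF assms(1)] by blast
qed

lemma antecedent_candidates_eq_sibling_keys:
  assumes "inj_on P {1..N}" "\<forall>i\<in>{1..N}. length (P i) = n" "h \<in> {1..n}"
  shows "{m \<in> {1..N - 1}. take (h - 1) (P m) = c
                          \<and> vanishes_above n h (cm n (map P [1..<N]) ! (m - 1))}
    = trie_key P N h ` {u \<in> trie_children P N (h - 1) c. trie_key P N h u < N}"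
proof -
  have inj: "inj_on P {1..<N}" using assms(1) by (rule inj_on_subset) auto
  have first_iff: "trie_key P N h (take h (P m)) = m
      \<longleftrightarrow> vanishes_above n h (cm n (map P [1..<N]) ! (m - 1))"
    if "m \<in> {1..<N}" for m
  proof -
    have "trie_key P N h (take h (P m)) = m
        \<longleftrightarrow> (\<forall>k\<in>{1..<N}. take h (P k) = take h (P m) \<longrightarrow> m \<le> k)"
      using trie_key_eq_iff[of m N P h] that by (auto simp: less_imp_le)
    also have "\<dots> \<longleftrightarrow> vanishes_above n h (cm n (map P [1..<N]) ! (m - 1))"
      using cm_map_vanishes_above_iff[OF inj, of n m h] assms(2,3) that by auto
    finally show ?thesis .
  qed
  have "h - 1 < n" "Suc (h - 1) = h" using assms(3) by auto
  then have "trie_key P N h ` {u \<in> trie_children P N (h - 1) c. trie_key P N h u < N}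
      = {m \<in> {1..N}. m < N \<and> take (h - 1) (P m) = c \<and> trie_key P N h (take h (P m)) = m}"
    using trie_child_keys_below[OF assms(2), of "h - 1" c N] by simp
  also have "\<dots> = {m \<in> {1..N - 1}. take (h - 1) (P m) = c
                                    \<and> vanishes_above n h (cm n (map P [1..<N]) ! (m - 1))}"
    using first_iff by auto
  finally show ?thesis by simp
qed

locale distinct_points =
  fixes P :: "nat \<Rightarrow> 'a list" and n N :: nat
  assumes dim_pos: "1 \<le> n" and two_points: "2 \<le> N"
    and length_points: "\<forall>i\<in>{1..N}. length (P i) = n" and inj_points: "inj_on P {1..N}"
begin

abbreviation sigma_N :: nat where
  "sigma_N \<equiv> sigma_val n (P N) (P ` {1..N - 1})"

lemma earlier_points: "P ` {1..N - 1} \<noteq> {}" "P N \<notin> P ` {1..N - 1}"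
  using two_points inj_on_eq_iff[OF inj_points, of N] by fastforce+

lemma sigma_N_mem: "sigma_N \<in> {1..n}"
  using sigma_val_mem(1)[OF dim_pos earlier_points(1)] by blast

lemma label_singleton_iff_sigma_N_le:
  assumes "t \<le> n"
  shows "trie_label P N t (take t (P N)) = {N} \<longleftrightarrow> sigma_N \<le> t"
proof -
  have "length (P N) = n" "\<forall>q\<in>P ` {1..N - 1}. length q = n" using two_points length_points by auto
  then show ?thesis
    using trie_label_eq_singleton_iff[of N P t] two_points
      sigma_val_le_iff[OF dim_pos earlier_points _ _ assms]
    by simp
qed

lemma least_singleton_level_eq_sigma_N:
  "(LEAST h. h \<in> {1..n} \<and> trie_label P N h (take h (P N)) = {N}) = sigma_N"
  using sigma_N_mem label_singleton_iff_sigma_N_le by (intro Least_equality) auto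

lemma sigma_N_node:
  defines "C \<equiv> trie_children P N (sigma_N - 1) (take (sigma_N - 1) (P N))"
    and "K \<equiv> trie_key P N sigma_N"
  shows "take sigma_N (P N) \<in> C" and "K (take sigma_N (P N)) = N" and "\<exists>u\<in>C. K u < N"
proof -
  have h: "Suc (sigma_N - 1) = sigma_N" "sigma_N - 1 < n" using sigma_N_mem by auto
  note children_iff = trie_children_iff[OF length_points h(2), unfolded h(1)]
  show "take sigma_N (P N) \<in> C" unfolding C_def using children_iff two_points by auto
  show "K (take sigma_N (P N)) = N"
    using label_singleton_iff_sigma_N_le[of sigma_N] sigma_N_mem
    unfolding K_def trie_key_def by simp
  obtain i where i: "i \<in> {1..N - 1}" "take (sigma_N - 1) (P i) = take (sigma_N - 1) (P N)"
    using sigma_val_mem(2)[OF dim_pos earlier_points(1), of "P N"] by auto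
  have "K (take sigma_N (P i)) \<le> i"
    unfolding K_def using i(1) by (intro trie_key_le) (auto simp: trie_label_def)
  moreover have "take sigma_N (P i) \<in> C" unfolding C_def using children_iff i by auto
  moreover have "i < N" using i(1) two_points by auto
  ultimately show "\<exists>u\<in>C. K u < N" by (intro bexI) auto
qed

end

theorem mainTheorem1:
  fixes P :: "nat \<Rightarrow> 'a::field list" and n N h :: nat
  assumes "n \<ge> 1" and "N \<ge> 2"
    and "\<forall>i \<in> {1..N}. length (P i) = n"
    and "inj_on P {1..N}"
    and "h = (LEAST h. h \<in> {1..n} \<and> trie_label P N h (take h (P N)) = {N})"
  shows "(\<exists>c \<in> trie_children P N (h - 1) (take (h - 1) (P N)). c \<noteq> take h (P N))
    \<and> h = sigma_val n (P N) (P ` {1..N - 1})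
    \<and> (\<exists>w. trie_left_neighbor P N (h - 1) (take (h - 1) (P N)) w (take h (P N)))
    \<and> (\<forall>w. trie_left_neighbor P N (h - 1) (take (h - 1) (P N)) w (take h (P N)) \<longrightarrow>
         (let i\<^sub>1 = Min (trie_label P N h w);
              Phi = cm n (map P [1..<N])
          in i\<^sub>1 \<in> {1..N - 1} \<and> take (h - 1) (P i\<^sub>1) = take (h - 1) (P N)
             \<and> (\<forall>j \<in> {h + 1..n}. Phi ! (i\<^sub>1 - 1) ! (j - 1) = 0)
             \<and> (\<forall>m \<in> {1..N - 1}. take (h - 1) (P m) = take (h - 1) (P N)
                   \<and> (\<forall>j \<in> {h + 1..n}. Phi ! (m - 1) ! (j - 1) = 0) \<longrightarrow> m \<le> i\<^sub>1)))"
proof -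
  interpret distinct_points P n N using assms(1-4) by unfold_locales
  let ?c = "take (h - 1) (P N)" and ?v = "take h (P N)" and ?K = "trie_key P N h"
  let ?C = "trie_children P N (h - 1) ?c"
  have h: "h = sigma_N" using assms(5) least_singleton_level_eq_sigma_N by simp
  have Suc_h: "Suc (h - 1) = h" using sigma_N_mem h by simp
  note v = sigma_N_node[folded h]
  define S where "S = {m \<in> {1..N - 1}. take (h - 1) (P m) = ?c
                         \<and> vanishes_above n h (cm n (map P [1..<N]) ! (m - 1))}"
  have S: "S = ?K ` {u \<in> ?C. ?K u < N}"
    unfolding S_def using antecedent_candidates_eq_sibling_keys[OF assms(4,3)] sigma_N_mem h
    by simp
  have "finite S" unfolding S by (intro finite_imageI finite_subset[OF _ finite_trie_children]) auto
  moreover have "S \<noteq> {}" unfolding S using v(3) by blast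
  ultimately have Max_S: "Max S \<in> S" "\<forall>m\<in>S. m \<le> Max S" by simp_all
  obtain u where u: "u \<in> ?C" "?K u < N" using v(3) by blast
  show ?thesis
  proof (intro conjI allI impI)
    have "u \<noteq> ?v" using u(2) v(2) by auto
    with u(1) show "\<exists>c\<in>?C. c \<noteq> ?v" ..
    show "h = sigma_N" by (fact h)
    show "\<exists>w. trie_left_neighbor P N (h - 1) ?c w ?v"
      using trie_left_neighbor_exists[OF v(1) u(1), unfolded Suc_h] u(2) v(2) by simp
  next
    fix w assume "trie_left_neighbor P N (h - 1) ?c w ?v"
    then have "Min (trie_label P N h w) = Max S"
      using trie_left_neighbor_iff_Max[OF v(1), unfolded Suc_h v(2)] S
      unfolding trie_key_def by simp
    with Max_S show "let i\<^sub>1 = Min (trie_label P N h w); Phi = cm n (map P [1..<N])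
          in i\<^sub>1 \<in> {1..N - 1} \<and> take (h - 1) (P i\<^sub>1) = ?c
             \<and> (\<forall>j \<in> {h + 1..n}. Phi ! (i\<^sub>1 - 1) ! (j - 1) = 0)
             \<and> (\<forall>m \<in> {1..N - 1}. take (h - 1) (P m) = ?c
                   \<and> (\<forall>j \<in> {h + 1..n}. Phi ! (m - 1) ! (j - 1) = 0) \<longrightarrow> m \<le> i\<^sub>1)"
      unfolding S_def vanishes_above_iff Let_def by auto
  qed
qed

end
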